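(* Let $(\delta_n)_{n\ge1}$ be real numbers with $1<\delta_n\to\infty$. Then there exist a nontrivial centralizer $\Omega:\ell_2\to\omega$, numbers $\kappa(n)$ with $\kappa(n)\le\delta_n$ for all $n$ and $\kappa(n)\to\infty$, and a sequence $(a_n)_{n=1}^\infty\subseteq\ell_2$ of non-null vectors with $\operatorname{supp}a_n\subseteq\{1,\dots,n\}$ such that $$\Omega(a_n)=-2a_n\cdot\log\kappa(n)\quad\text{for all }n.$$
   Context: $\omega$ denotes the space of all complex sequences. A centralizer on $\ell_2$ is a (homogeneous) map $\Omega:\ell_2\to\omega$ for which there is $C>0$ with $\Omega(ab)-a\Omega(b)\in\ell_2$ and $\|\Omega(ab)-a\Omega(b)\|_{\ell_2}\le C\|a\|_\infty\|b\|_{\ell_2}$ for all $a\in\ell_\infty$, $b\in\ell_2$ (coordinatewise products). $\Omega$ is trivial if there is a linear (possibly unbounded) map $L:\ell_2\to\omega$ with $\sup_{\|x\|_{\ell_2}\le1}\|\Omega(x)-L(x)\|_{\ell_2}<\infty$, and nontrivial otherwise. *)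

theory Defs
  imports "HOL-Analysis.Analysis"
begin

text \<open>Complex sequences (the space omega) are functions nat => complex.
  Coordinates are indexed from 0, so the coordinate set {1,...,n} of the paper
  corresponds to {0..<n} here.\<close>

definition l2 :: "(nat \<Rightarrow> complex) set" where
  "l2 = {x. summable (\<lambda>i. (norm (x i))\<^sup>2)}"

definition l2norm :: "(nat \<Rightarrow> complex) \<Rightarrow> real" where
  "l2norm x = sqrt (\<Sum>i. (norm (x i))\<^sup>2)"

definition linf :: "(nat \<Rightarrow> complex) set" where
  "linf = {a. bounded (range a)}"

definition linfnorm :: "(nat \<Rightarrow> complex) \<Rightarrow> real" where
  "linfnorm a = (SUP i. norm (a i))"

definition homogeneous_on_l2 :: "((nat \<Rightarrow> complex) \<Rightarrow> (nat \<Rightarrow> complex)) \<Rightarrow> bool" where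
  "homogeneous_on_l2 \<Omega> \<longleftrightarrow> (\<forall>x\<in>l2. \<forall>c::complex. \<Omega> (\<lambda>i. c * x i) = (\<lambda>i. c * \<Omega> x i))"

definition centralizer :: "((nat \<Rightarrow> complex) \<Rightarrow> (nat \<Rightarrow> complex)) \<Rightarrow> bool" where
  "centralizer \<Omega> \<longleftrightarrow> homogeneous_on_l2 \<Omega> \<and>
     (\<exists>C>0. \<forall>a\<in>linf. \<forall>b\<in>l2.
        (\<lambda>i. \<Omega> (\<lambda>j. a j * b j) i - a i * \<Omega> b i) \<in> l2 \<and>
        l2norm (\<lambda>i. \<Omega> (\<lambda>j. a j * b j) i - a i * \<Omega> b i) \<le> C * linfnorm a * l2norm b)"

definition linear_on_l2 :: "((nat \<Rightarrow> complex) \<Rightarrow> (nat \<Rightarrow> complex)) \<Rightarrow> bool" where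
  "linear_on_l2 L \<longleftrightarrow>
     (\<forall>x\<in>l2. \<forall>y\<in>l2. L (\<lambda>i. x i + y i) = (\<lambda>i. L x i + L y i)) \<and>
     (\<forall>x\<in>l2. \<forall>c::complex. L (\<lambda>i. c * x i) = (\<lambda>i. c * L x i))"

definition trivial_centralizer :: "((nat \<Rightarrow> complex) \<Rightarrow> (nat \<Rightarrow> complex)) \<Rightarrow> bool" where
  "trivial_centralizer \<Omega> \<longleftrightarrow>
     (\<exists>L. linear_on_l2 L \<and> (\<exists>M. \<forall>x\<in>l2. l2norm x \<le> 1 \<longrightarrow>
        (\<lambda>i. \<Omega> x i - L x i) \<in> l2 \<and> l2norm (\<lambda>i. \<Omega> x i - L x i) \<le> M))"

end

theory Submission
  imports Defs
begin

(* Take for \<Omega> four times the Kalton-Peck map x \<mapsto> x log(|x|/\<parallel>x\<parallel>). Its commutator with a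
   multiplier a is, coordinatewise, 4 a_i b_i log(|a_i| \<parallel>b\<parallel> / \<parallel>ab\<parallel>); splitting according to
   whether the argument of the logarithm exceeds 1 and using t |log t| \<le> 1 on (0,1] and
   s log(P/s) \<le> P bounds it by a multiple of \<parallel>a\<parallel>_\<infinity> \<parallel>b\<parallel>.
   On a vector whose first N entries have equal modulus and the rest vanish, \<Omega> is multiplication
   by -2 log N; taking N = min(n, \<lfloor>\<delta>_n\<rfloor>) produces a_n and \<kappa>(n).
   If a linear L were within M of \<Omega> on the unit ball, it would be within M of 0 on the unit
   vectors, where \<Omega> vanishes. Choosing signs one at a time via the parallelogram law gives
   x = (\<plusminus>1/sqrt N, ..., \<plusminus>1/sqrt N, 0, ...) of norm 1 whose image under L has norm at most M
   on {0..<N}, whereas \<Omega>x = -2 log N x there; this is impossible once log N > M. *)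

lemma parallelogram_law:
  fixes x y :: "'a::real_inner"
  shows "(norm (x + y))\<^sup>2 + (norm (x - y))\<^sup>2 = 2 * (norm x)\<^sup>2 + 2 * (norm y)\<^sup>2"
  by (simp add: power2_norm_eq_inner inner_add inner_diff inner_commute)

lemma abs_mult_ln_le_one:
  fixes r :: real
  assumes "0 < r" "r \<le> 1"
  shows "\<bar>r * ln r\<bar> \<le> 1"
proof -
  have "- ln r \<le> 1 / r - 1"
    using ln_le_minus_one[of "1 / r"] assms by (simp add: ln_div)
  then have "r * - ln r \<le> 1 - r"
    using mult_left_mono[of "- ln r" "1 / r - 1" r] assms by (simp add: algebra_simps)
  moreover have "r * ln r \<le> 0"
    using assms by (simp add: mult_nonneg_nonpos)
  ultimately show ?thesis
    using assms by linarith
qed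

lemma mult_ln_div_power2_le:
  fixes S P :: real
  assumes "0 \<le> S" "S \<le> P"
  shows "(S * ln (P / S))\<^sup>2 \<le> P\<^sup>2"
proof (cases "S = 0")
  case False
  then have "0 < S" using assms by simp
  have "S * ln (P / S) \<le> S * (P / S - 1)"
    using ln_le_minus_one[of "P / S"] \<open>0 < S\<close> assms by (intro mult_left_mono) auto
  also have "\<dots> \<le> P"
    using \<open>0 < S\<close> by (simp add: right_diff_distrib)
  finally have "S * ln (P / S) \<le> P" .
  moreover have "0 \<le> S * ln (P / S)" using \<open>0 < S\<close> assms by simp
  ultimately show ?thesis by (intro power_mono)
qed simp

lemma kalton_peck_log_estimate:
  fixes \<alpha> \<beta> A B S :: real
  assumes "0 \<le> \<alpha>" "0 \<le> \<beta>" "\<alpha> \<le> A" "\<beta> \<le> B" "\<alpha> * \<beta> \<le> S" "S \<le> A * B"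
  shows "(\<alpha> * \<beta> * (ln (\<alpha> * \<beta> / S) - ln (\<beta> / B)))\<^sup>2
           \<le> (\<alpha> * \<beta> * ln (A * B / S))\<^sup>2 + (S * \<beta> / B)\<^sup>2"
proof (cases "\<alpha> * \<beta> = 0")
  case False
  then have "0 < \<alpha>" "0 < \<beta>" using assms(1,2) by auto
  then have "0 < S" "0 < B"
    using assms(4,5) mult_pos_pos[of \<alpha> \<beta>] by linarith+
  define r where "r = \<alpha> * B / S"
  have "0 < r" unfolding r_def using \<open>0 < \<alpha>\<close> \<open>0 < B\<close> \<open>0 < S\<close> by simp
  have "ln (\<alpha> * \<beta> / S) - ln (\<beta> / B) = ln r"
    unfolding r_def using \<open>0 < \<alpha>\<close> \<open>0 < \<beta>\<close> \<open>0 < B\<close> \<open>0 < S\<close> by (simp add: ln_div ln_mult)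
  then have lhs: "(\<alpha> * \<beta> * (ln (\<alpha> * \<beta> / S) - ln (\<beta> / B)))\<^sup>2 = (\<alpha> * \<beta> * ln r)\<^sup>2"
    by simp
  show ?thesis
  proof (cases "1 \<le> r")
    case True
    have "r \<le> A * B / S"
      unfolding r_def using assms(3) \<open>0 < B\<close> \<open>0 < S\<close> by (simp add: divide_right_mono)
    then have "(ln r)\<^sup>2 \<le> (ln (A * B / S))\<^sup>2"
      using True \<open>0 < r\<close> by (intro power_mono) simp_all
    then have "(\<alpha> * \<beta> * ln r)\<^sup>2 \<le> (\<alpha> * \<beta> * ln (A * B / S))\<^sup>2"
      by (simp add: power_mult_distrib mult_left_mono)
    then show ?thesis unfolding lhs by (simp add: add_increasing2)
  next
    case False
    have "\<alpha> * \<beta> * ln r = S * \<beta> / B * (r * ln r)"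
      unfolding r_def using \<open>0 < B\<close> \<open>0 < S\<close> by (simp add: field_simps)
    then have "(\<alpha> * \<beta> * ln r)\<^sup>2 = (S * \<beta> / B)\<^sup>2 * (r * ln r)\<^sup>2"
      by (simp only: power_mult_distrib)
    also have "\<dots> \<le> (S * \<beta> / B)\<^sup>2"
      using abs_mult_ln_le_one[of r] \<open>0 < r\<close> False
      by (intro mult_left_le) (simp_all add: abs_square_le_1)
    finally have "(\<alpha> * \<beta> * ln r)\<^sup>2 \<le> (S * \<beta> / B)\<^sup>2" .
    then show ?thesis unfolding lhs by (simp add: add_increasing)
  qed
qed auto

lemma l2norm_power2: "x \<in> l2 \<Longrightarrow> (l2norm x)\<^sup>2 = (\<Sum>i. (norm (x i))\<^sup>2)"
  unfolding l2_def l2norm_def by (simp add: suminf_nonneg)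

lemma l2norm_nonneg: "x \<in> l2 \<Longrightarrow> 0 \<le> l2norm x"
  unfolding l2_def l2norm_def by (simp add: suminf_nonneg)

lemma l2_finite_support:
  assumes "\<And>i. n \<le> i \<Longrightarrow> x i = 0"
  shows "x \<in> l2" and "l2norm x = L2_set (\<lambda>i. norm (x i)) {..<n}"
proof -
  have "(\<lambda>i. (norm (x i))\<^sup>2) sums (\<Sum>i<n. (norm (x i))\<^sup>2)"
    using assms by (intro sums_finite) (auto simp: not_less)
  then show "x \<in> l2" and "l2norm x = L2_set (\<lambda>i. norm (x i)) {..<n}"
    unfolding l2_def l2norm_def L2_set_def by (auto simp: sums_iff)
qed

lemma L2_set_le_l2norm:
  assumes "x \<in> l2"
  shows "L2_set (\<lambda>i. norm (x i)) A \<le> l2norm x"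
proof (cases "finite A")
  case True
  have "(\<Sum>i\<in>A. (norm (x i))\<^sup>2) \<le> (\<Sum>i. (norm (x i))\<^sup>2)"
    using assms True unfolding l2_def by (intro sum_le_suminf) auto
  then show ?thesis unfolding L2_set_def l2norm_def by simp
qed (simp add: l2norm_nonneg assms)

lemma norm_le_l2norm: "x \<in> l2 \<Longrightarrow> norm (x i) \<le> l2norm x"
  using L2_set_le_l2norm[of x "{i}"] by simp

lemma l2_comparison:
  assumes "\<And>i. (norm (x i))\<^sup>2 \<le> g i" and "summable g"
  shows "x \<in> l2" and "l2norm x \<le> sqrt (suminf g)"
proof -
  show "x \<in> l2"
    unfolding l2_def using assms by (auto intro: summable_comparison_test')
  then show "l2norm x \<le> sqrt (suminf g)"
    unfolding l2norm_def l2_def using assms by (auto intro: suminf_le)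
qed

lemma l2_add:
  assumes "x \<in> l2" "y \<in> l2"
  shows "(\<lambda>i. x i + y i) \<in> l2"
proof (rule l2_comparison)
  show "(norm (x i + y i))\<^sup>2 \<le> 2 * (norm (x i))\<^sup>2 + 2 * (norm (y i))\<^sup>2" for i
    using parallelogram_law[of "x i" "y i"] zero_le_power2[of "norm (x i - y i)"]
    by linarith
  show "summable (\<lambda>i. 2 * (norm (x i))\<^sup>2 + 2 * (norm (y i))\<^sup>2)"
    using assms unfolding l2_def by (intro summable_add summable_mult) auto
qed

lemma l2_scale:
  assumes "x \<in> l2"
  shows "(\<lambda>i. c * x i) \<in> l2" and "l2norm (\<lambda>i. c * x i) = norm c * l2norm x"
proof -
  have "summable (\<lambda>i. (norm (x i))\<^sup>2)" using assms unfolding l2_def by simp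
  then have "(\<lambda>i. (norm (c * x i))\<^sup>2) sums ((norm c)\<^sup>2 * (\<Sum>i. (norm (x i))\<^sup>2))"
    by (simp add: norm_mult power_mult_distrib summable_sums sums_mult)
  then show "(\<lambda>i. c * x i) \<in> l2" and "l2norm (\<lambda>i. c * x i) = norm c * l2norm x"
    unfolding l2_def l2norm_def by (auto simp: sums_iff real_sqrt_mult)
qed

lemma l2_sum:
  assumes "finite J" and "\<And>j. j \<in> J \<Longrightarrow> v j \<in> l2"
  shows "(\<lambda>i. \<Sum>j\<in>J. c j * v j i) \<in> l2"
  using assms
proof (induction J rule: finite_induct)
  case empty
  show ?case using l2_finite_support(1)[of 0] by simp
next
  case (insert j J)
  then show ?case by (simp add: l2_add l2_scale)
qed

lemma norm_le_linfnorm: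
  assumes "a \<in> linf"
  shows "norm (a i) \<le> linfnorm a"
proof -
  have "bdd_above (range (\<lambda>i. norm (a i)))"
    using assms unfolding linf_def by (auto simp: bounded_iff bdd_above_def)
  then show ?thesis unfolding linfnorm_def by (rule cSUP_upper[OF UNIV_I])
qed

lemma linfnorm_nonneg: "a \<in> linf \<Longrightarrow> 0 \<le> linfnorm a"
  using norm_le_linfnorm[of a 0] norm_ge_zero order_trans by blast

lemma l2_mult_linf:
  assumes "a \<in> linf" and "b \<in> l2"
  shows "(\<lambda>i. a i * b i) \<in> l2" and "l2norm (\<lambda>i. a i * b i) \<le> linfnorm a * l2norm b"
proof -
  have bound: "(norm (a i * b i))\<^sup>2 \<le> (linfnorm a)\<^sup>2 * (norm (b i))\<^sup>2" for i
    using norm_le_linfnorm[OF assms(1), of i]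
    by (simp add: norm_mult power_mult_distrib mult_right_mono power_mono)
  have summable: "summable (\<lambda>i. (linfnorm a)\<^sup>2 * (norm (b i))\<^sup>2)"
    using assms(2) unfolding l2_def by (intro summable_mult) simp
  show "(\<lambda>i. a i * b i) \<in> l2" by (rule l2_comparison(1)[OF bound summable])
  have "(\<Sum>i. (linfnorm a)\<^sup>2 * (norm (b i))\<^sup>2) = (linfnorm a * l2norm b)\<^sup>2"
    using assms(2) unfolding l2_def
    by (simp add: suminf_mult power_mult_distrib l2norm_power2[OF assms(2)])
  moreover have "0 \<le> linfnorm a * l2norm b"
    using linfnorm_nonneg[OF assms(1)] l2norm_nonneg[OF assms(2)] by simp
  ultimately show "l2norm (\<lambda>i. a i * b i) \<le> linfnorm a * l2norm b"
    using l2_comparison(2)[OF bound summable] by simp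
qed

(* The factor 4 turns log(1/sqrt N) on a flat vector with N nonzero entries into -2 log N. *)
definition kalton_peck :: "(nat \<Rightarrow> complex) \<Rightarrow> nat \<Rightarrow> complex" where
  "kalton_peck x = (\<lambda>i. 4 * x i * of_real (ln (norm (x i) / l2norm x)))"

lemma kalton_peck_homogeneous: "homogeneous_on_l2 kalton_peck"
  unfolding homogeneous_on_l2_def
proof (intro ballI allI)
  fix x :: "nat \<Rightarrow> complex" and c :: complex
  assume "x \<in> l2"
  show "kalton_peck (\<lambda>i. c * x i) = (\<lambda>i. c * kalton_peck x i)"
  proof (cases "c = 0")
    case False
    then have "norm (c * x i) / l2norm (\<lambda>i. c * x i) = norm (x i) / l2norm x" for i
      by (simp add: l2_scale(2)[OF \<open>x \<in> l2\<close>] norm_mult)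
    then show ?thesis unfolding kalton_peck_def by (simp add: algebra_simps)
  qed (simp add: kalton_peck_def)
qed

lemma kalton_peck_commutator:
  "kalton_peck (\<lambda>j. a j * b j) i - a i * kalton_peck b i
     = 4 * (a i * b i) * of_real (ln (norm (a i * b i) / l2norm (\<lambda>j. a j * b j)) - ln (norm (b i) / l2norm b))"
  by (simp add: kalton_peck_def algebra_simps)

lemma kalton_peck_commutator_pointwise:
  assumes "a \<in> linf" and "b \<in> l2"
  defines "A \<equiv> linfnorm a" and "B \<equiv> l2norm b" and "S \<equiv> l2norm (\<lambda>j. a j * b j)"
  shows "(norm (kalton_peck (\<lambda>j. a j * b j) i - a i * kalton_peck b i))\<^sup>2
           \<le> 16 * ((norm (a i * b i))\<^sup>2 * (ln (A * B / S))\<^sup>2 + (S / B)\<^sup>2 * (norm (b i))\<^sup>2)"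
proof -
  have ab: "(\<lambda>j. a j * b j) \<in> l2" and "S \<le> A * B"
    using l2_mult_linf[OF assms(1,2)] unfolding A_def B_def S_def by simp_all
  have "(norm (kalton_peck (\<lambda>j. a j * b j) i - a i * kalton_peck b i))\<^sup>2
      = 16 * (norm (a i) * norm (b i) * (ln (norm (a i) * norm (b i) / S) - ln (norm (b i) / B)))\<^sup>2"
    unfolding kalton_peck_commutator S_def B_def by (simp add: norm_mult power_mult_distrib del: of_real_diff)
  also have "\<dots> \<le> 16 * ((norm (a i) * norm (b i) * ln (A * B / S))\<^sup>2 + (S * norm (b i) / B)\<^sup>2)"
    using norm_le_linfnorm[OF assms(1)] norm_le_l2norm[OF assms(2)] norm_le_l2norm[OF ab] \<open>S \<le> A * B\<close>
    unfolding A_def B_def S_def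
    by (intro mult_left_mono kalton_peck_log_estimate) (simp_all add: norm_mult)
  also have "\<dots> = 16 * ((norm (a i * b i))\<^sup>2 * (ln (A * B / S))\<^sup>2 + (S / B)\<^sup>2 * (norm (b i))\<^sup>2)"
    by (simp add: norm_mult power_mult_distrib power_divide)
  finally show ?thesis .
qed

lemma kalton_peck_commutator_bound:
  assumes "a \<in> linf" and "b \<in> l2"
  shows "(\<lambda>i. kalton_peck (\<lambda>j. a j * b j) i - a i * kalton_peck b i) \<in> l2 \<and>
         l2norm (\<lambda>i. kalton_peck (\<lambda>j. a j * b j) i - a i * kalton_peck b i) \<le> 6 * linfnorm a * l2norm b"
proof -
  define A B S where "A = linfnorm a" and "B = l2norm b" and "S = l2norm (\<lambda>j. a j * b j)"
  define g where "g i = 16 * ((norm (a i * b i))\<^sup>2 * (ln (A * B / S))\<^sup>2 + (S / B)\<^sup>2 * (norm (b i))\<^sup>2)" for i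
  have ab: "(\<lambda>j. a j * b j) \<in> l2" and "S \<le> A * B"
    using l2_mult_linf[OF assms] unfolding A_def B_def S_def by simp_all
  have "0 \<le> A" "0 \<le> S"
    unfolding A_def S_def using linfnorm_nonneg[OF assms(1)] l2norm_nonneg[OF ab] by simp_all
  have pointwise: "(norm (kalton_peck (\<lambda>j. a j * b j) i - a i * kalton_peck b i))\<^sup>2 \<le> g i" for i
    using kalton_peck_commutator_pointwise[OF assms] unfolding g_def A_def B_def S_def .
  have "(\<lambda>i. (norm (a i * b i))\<^sup>2) sums S\<^sup>2" "(\<lambda>i. (norm (b i))\<^sup>2) sums B\<^sup>2"
    using ab assms(2) unfolding S_def B_def l2norm_power2[OF ab] l2norm_power2[OF assms(2)]
    by (simp_all add: l2_def summable_sums)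
  then have g_sums: "g sums (16 * (S\<^sup>2 * (ln (A * B / S))\<^sup>2 + (S / B)\<^sup>2 * B\<^sup>2))"
    unfolding g_def by (intro sums_mult sums_add sums_mult2)
  then have "suminf g = 16 * ((S * ln (A * B / S))\<^sup>2 + (S / B)\<^sup>2 * B\<^sup>2)"
    by (simp add: sums_iff power_mult_distrib)
  also have "\<dots> \<le> 16 * ((A * B)\<^sup>2 + (A * B)\<^sup>2)"
  proof -
    have "(S / B)\<^sup>2 * B\<^sup>2 \<le> S\<^sup>2" by (cases "B = 0") (simp_all add: power_divide)
    also have "\<dots> \<le> (A * B)\<^sup>2" using \<open>0 \<le> S\<close> \<open>S \<le> A * B\<close> by (intro power_mono)
    finally show ?thesis
      using mult_ln_div_power2_le[OF \<open>0 \<le> S\<close> \<open>S \<le> A * B\<close>] by simp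
  qed
  also have "\<dots> \<le> (6 * A * B)\<^sup>2" by (simp add: power_mult_distrib)
  finally have "sqrt (suminf g) \<le> 6 * A * B"
    using \<open>0 \<le> A\<close> l2norm_nonneg[OF assms(2)] unfolding B_def by (intro real_le_lsqrt) simp_all
  then show ?thesis
    using l2_comparison[OF pointwise sums_summable[OF g_sums]] unfolding A_def B_def by simp
qed

lemma centralizer_kalton_peck: "centralizer kalton_peck"
  unfolding centralizer_def
  using kalton_peck_homogeneous kalton_peck_commutator_bound by (intro conjI exI[of _ 6]) auto

lemma exists_signs_sum_norm_power2_le:
  fixes y :: "nat \<Rightarrow> 'i \<Rightarrow> 'a::real_inner"
  shows "\<exists>\<epsilon>. (\<forall>j. \<epsilon> j = 1 \<or> \<epsilon> j = -1) \<and>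
           (\<Sum>i\<in>A. (norm (\<Sum>j<n. \<epsilon> j *\<^sub>R y j i))\<^sup>2) \<le> (\<Sum>j<n. \<Sum>i\<in>A. (norm (y j i))\<^sup>2)"
proof (induction n)
  case (Suc n)
  then obtain \<epsilon> where signs: "\<forall>j. \<epsilon> j = 1 \<or> \<epsilon> j = -1"
    and IH: "(\<Sum>i\<in>A. (norm (\<Sum>j<n. \<epsilon> j *\<^sub>R y j i))\<^sup>2) \<le> (\<Sum>j<n. \<Sum>i\<in>A. (norm (y j i))\<^sup>2)"
    by blast
  define u where "u i = (\<Sum>j<n. \<epsilon> j *\<^sub>R y j i)" for i
  define Q where "Q s = (\<Sum>i\<in>A. (norm (u i + s *\<^sub>R y n i))\<^sup>2)" for s
  have "Q 1 + Q (-1) = 2 * ((\<Sum>i\<in>A. (norm (u i))\<^sup>2) + (\<Sum>i\<in>A. (norm (y n i))\<^sup>2))"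
    unfolding Q_def
    by (simp add: sum.distrib[symmetric] sum_distrib_left parallelogram_law)
  \<comment> \<open>the better of the two signs does not exceed the average\<close>
  then obtain s where s: "s = 1 \<or> s = -1"
    and "Q s \<le> (\<Sum>i\<in>A. (norm (u i))\<^sup>2) + (\<Sum>i\<in>A. (norm (y n i))\<^sup>2)"
    by (cases "Q 1 \<le> Q (-1)") force+
  then have "Q s \<le> (\<Sum>j<Suc n. \<Sum>i\<in>A. (norm (y j i))\<^sup>2)"
    using IH unfolding u_def by simp
  moreover have "(\<Sum>j<Suc n. (\<epsilon>(n := s)) j *\<^sub>R y j i) = u i + s *\<^sub>R y n i" for i
    unfolding u_def by simp
  ultimately show ?case
    using signs s unfolding Q_def by (intro exI[of _ "\<epsilon>(n := s)"]) auto
qed (intro exI[of _ "\<lambda>_. 1"], simp)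

definition unit_seq :: "nat \<Rightarrow> nat \<Rightarrow> complex" where
  "unit_seq j = (\<lambda>i. if i = j then 1 else 0)"

lemma unit_seq_l2: "unit_seq j \<in> l2" and l2norm_unit_seq: "l2norm (unit_seq j) = 1"
  using l2_finite_support[of "Suc j" "unit_seq j"] by (simp_all add: unit_seq_def L2_set_def)

lemma kalton_peck_unit_seq: "kalton_peck (unit_seq j) = (\<lambda>i. 0)"
  unfolding kalton_peck_def l2norm_unit_seq by (auto simp: unit_seq_def)

lemma sum_unit_seq: "(\<Sum>j<n. c j * unit_seq j i) = (if i < n then c i else 0)"
proof -
  have "(\<Sum>j<n. c j * unit_seq j i) = (\<Sum>j<n. if i = j then c j else 0)"
    by (intro sum.cong) (auto simp: unit_seq_def)
  then show ?thesis by simp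
qed

lemma linear_on_l2_zero:
  assumes "linear_on_l2 L"
  shows "L (\<lambda>i. 0) = (\<lambda>i. 0)"
proof -
  have "(\<lambda>i. 0) \<in> l2" using l2_finite_support(1)[of 0] by simp
  moreover have "\<And>x c. x \<in> l2 \<Longrightarrow> L (\<lambda>i. c * x i) = (\<lambda>i. c * L x i)"
    using assms unfolding linear_on_l2_def by blast
  ultimately have "L (\<lambda>i. 0 * 0) = (\<lambda>i. 0 * L (\<lambda>i. 0) i)" by blast
  then show ?thesis by simp
qed

lemma linear_on_l2_sum:
  assumes "linear_on_l2 L" and "finite J" and "\<And>j. j \<in> J \<Longrightarrow> v j \<in> l2"
  shows "L (\<lambda>i. \<Sum>j\<in>J. c j * v j i) = (\<lambda>i. \<Sum>j\<in>J. c j * L (v j) i)"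
  using assms(2,3)
proof (induction J rule: finite_induct)
  case empty
  show ?case using linear_on_l2_zero[OF assms(1)] by simp
next
  case (insert j J)
  then have "(\<lambda>i. c j * v j i) \<in> l2" "(\<lambda>i. \<Sum>j\<in>J. c j * v j i) \<in> l2"
    by (simp_all add: l2_scale l2_sum)
  with insert assms(1) show ?case unfolding linear_on_l2_def by simp
qed

lemma l2norm_flat:
  fixes n :: nat
  assumes "\<And>i. i < n \<Longrightarrow> norm (x i) = r" and "\<And>i. n \<le> i \<Longrightarrow> x i = 0"
  shows "l2norm x = sqrt n * \<bar>r\<bar>"
proof -
  have "l2norm x = L2_set (\<lambda>i. norm (x i)) {..<n}" using l2_finite_support(2) assms(2) .
  also have "\<dots> = L2_set (\<lambda>i. r) {..<n}" using assms(1) by (intro L2_set_cong) simp_all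
  finally have "l2norm x = L2_set (\<lambda>i. r) {..<n}" .
  then show ?thesis by (simp add: L2_set_constant)
qed

lemma kalton_peck_flat:
  fixes n :: nat
  assumes "\<And>i. i < n \<Longrightarrow> norm (x i) = r" and "\<And>i. n \<le> i \<Longrightarrow> x i = 0"
  shows "kalton_peck x = (\<lambda>i. - 2 * x i * of_real (ln n))"
proof
  fix i
  show "kalton_peck x i = - 2 * x i * of_real (ln n)"
  proof (cases "i < n \<and> r \<noteq> 0")
    case True
    then have "0 < r" using assms(1) norm_ge_zero[of "x i"] by force
    moreover have "l2norm x = sqrt n * r" using l2norm_flat[OF assms] \<open>0 < r\<close> by simp
    ultimately have "ln (norm (x i) / l2norm x) = - ln n / 2"
      using True assms(1) by (simp add: ln_div ln_sqrt)
    then show ?thesis by (simp add: kalton_peck_def)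
  next
    case False
    then have "x i = 0" using assms by (metis norm_eq_zero not_less)
    then show ?thesis by (simp add: kalton_peck_def)
  qed
qed

lemma L2_set_kalton_peck_flat:
  fixes n :: nat
  assumes "\<And>i. i < n \<Longrightarrow> norm (x i) = r" and "\<And>i. n \<le> i \<Longrightarrow> x i = 0"
  shows "L2_set (\<lambda>i. norm (kalton_peck x i)) {..<n} = 2 * ln n * l2norm x"
proof -
  have "0 \<le> ln n" by (cases "n = 0") simp_all
  then have "L2_set (\<lambda>i. norm (kalton_peck x i)) {..<n} = L2_set (\<lambda>i. 2 * ln n * norm (x i)) {..<n}"
    using kalton_peck_flat[OF assms] by (simp add: norm_mult mult_ac)
  also have "\<dots> = 2 * ln n * l2norm x"
    using \<open>0 \<le> ln n\<close> l2_finite_support(2)[OF assms(2)] by (simp add: L2_set_right_distrib)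
  finally show ?thesis .
qed

lemma exists_flat_vector_with_small_image:
  assumes "linear_on_l2 L" and "0 < N"
    and unit_bound: "\<And>j. L2_set (\<lambda>i. norm (L (unit_seq j) i)) {..<N} \<le> M"
  shows "\<exists>x. (\<forall>i<N. norm (x i) = 1 / sqrt N) \<and> (\<forall>i\<ge>N. x i = 0) \<and>
             L2_set (\<lambda>i. norm (L x i)) {..<N} \<le> M"
proof -
  obtain \<epsilon> where signs: "\<forall>j. \<epsilon> j = 1 \<or> \<epsilon> j = -1"
    and averaged: "(\<Sum>i<N. (norm (\<Sum>j<N. \<epsilon> j *\<^sub>R L (unit_seq j) i))\<^sup>2)
                     \<le> (\<Sum>j<N. \<Sum>i<N. (norm (L (unit_seq j) i))\<^sup>2)"
    using exists_signs_sum_norm_power2_le[where y = "\<lambda>j. L (unit_seq j)" and A = "{..<N}" and n = N]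
    by blast
  define x where "x = (\<lambda>k. if k < N then complex_of_real (\<epsilon> k / sqrt N) else 0)"
  have flat: "norm (x i) = 1 / sqrt N" if "i < N" for i
  proof -
    have "\<bar>\<epsilon> i\<bar> = 1" using signs by (metis abs_1 abs_minus_cancel)
    then show ?thesis using that by (simp add: x_def norm_divide)
  qed
  have "x = (\<lambda>k. \<Sum>j<N. of_real (\<epsilon> j / sqrt N) * unit_seq j k)"
    by (simp only: sum_unit_seq x_def)
  then have "L x = (\<lambda>i. \<Sum>j<N. of_real (\<epsilon> j / sqrt N) * L (unit_seq j) i)"
    by (simp only: linear_on_l2_sum[OF assms(1) finite_lessThan unit_seq_l2])
  then have "L x i = (\<Sum>j<N. \<epsilon> j *\<^sub>R L (unit_seq j) i) / of_real (sqrt N)" for i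
    by (simp add: sum_divide_distrib scaleR_conv_of_real)
  then have "norm (L x i) = norm (\<Sum>j<N. \<epsilon> j *\<^sub>R L (unit_seq j) i) / sqrt N" for i
    by (simp add: norm_divide)
  then have "(\<Sum>i<N. (norm (L x i))\<^sup>2) = (\<Sum>i<N. (norm (\<Sum>j<N. \<epsilon> j *\<^sub>R L (unit_seq j) i))\<^sup>2) / N"
    by (simp add: power_divide sum_divide_distrib)
  also have "\<dots> \<le> (\<Sum>j<N. \<Sum>i<N. (norm (L (unit_seq j) i))\<^sup>2) / N"
    using averaged by (simp add: divide_right_mono)
  also have "\<dots> \<le> (\<Sum>j<N. M\<^sup>2) / N"
    using unit_bound unfolding L2_set_def by (intro divide_right_mono sum_mono sqrt_le_D) simp_all
  also have "\<dots> = M\<^sup>2" using \<open>0 < N\<close> by simp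
  finally have "L2_set (\<lambda>i. norm (L x i)) {..<N} \<le> M"
    using order_trans[OF L2_set_nonneg unit_bound] unfolding L2_set_def by (intro real_le_lsqrt)
  then show ?thesis using flat by (intro exI[of _ x]) (simp add: x_def)
qed

lemma kalton_peck_not_trivial: "\<not> trivial_centralizer kalton_peck"
proof
  assume "trivial_centralizer kalton_peck"
  then obtain L M where "linear_on_l2 L"
    and approx: "\<And>x. x \<in> l2 \<Longrightarrow> l2norm x \<le> 1 \<Longrightarrow>
                  (\<lambda>i. kalton_peck x i - L x i) \<in> l2 \<and> l2norm (\<lambda>i. kalton_peck x i - L x i) \<le> M"
    unfolding trivial_centralizer_def by blast
  have approx_L2_set: "L2_set (\<lambda>i. norm (kalton_peck x i - L x i)) A \<le> M"
    if "x \<in> l2" "l2norm x \<le> 1" for x A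
    using approx[OF that] L2_set_le_l2norm order_trans by blast
  define N :: nat where "N = nat \<lceil>exp M\<rceil> + 1"
  have "0 < N" and "exp M < N" unfolding N_def by linarith+
  then have "M < ln N" using ln_less_cancel_iff[of "exp M" N] by simp
  have "L2_set (\<lambda>i. norm (L (unit_seq j) i)) {..<N} \<le> M" for j
    using approx_L2_set[OF unit_seq_l2, of j "{..<N}"] by (simp add: kalton_peck_unit_seq l2norm_unit_seq)
  then obtain x where flat: "\<And>i. i < N \<Longrightarrow> norm (x i) = 1 / sqrt N"
    and support: "\<And>i. N \<le> i \<Longrightarrow> x i = 0" and small_image: "L2_set (\<lambda>i. norm (L x i)) {..<N} \<le> M"
    using exists_flat_vector_with_small_image[OF \<open>linear_on_l2 L\<close> \<open>0 < N\<close>] by blast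
  have "x \<in> l2" using l2_finite_support(1)[OF support] .
  have "l2norm x = 1" using l2norm_flat[OF flat support] \<open>0 < N\<close> by simp
  then have "2 * ln N = L2_set (\<lambda>i. norm (kalton_peck x i)) {..<N}"
    using L2_set_kalton_peck_flat[OF flat support] by simp
  also have "\<dots> \<le> L2_set (\<lambda>i. norm (kalton_peck x i - L x i) + norm (L x i)) {..<N}"
    by (rule L2_set_mono) (metis add.commute norm_triangle_sub, simp)
  also have "\<dots> \<le> L2_set (\<lambda>i. norm (kalton_peck x i - L x i)) {..<N} + L2_set (\<lambda>i. norm (L x i)) {..<N}"
    by (rule L2_set_triangle_ineq)
  also have "\<dots> \<le> M + M"
    using approx_L2_set[OF \<open>x \<in> l2\<close>] \<open>l2norm x = 1\<close> small_image by (intro add_mono) simp_all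
  finally show False using \<open>M < ln N\<close> by simp
qed

lemma exists_nat_lower_approximation_at_top:
  fixes \<delta> :: "nat \<Rightarrow> real"
  assumes "\<forall>n\<ge>1. 1 \<le> \<delta> n" and "filterlim \<delta> at_top sequentially"
  shows "\<exists>m :: nat \<Rightarrow> nat. (\<forall>n\<ge>1. 1 \<le> m n \<and> m n \<le> n \<and> real (m n) \<le> \<delta> n) \<and>
           filterlim (\<lambda>n. real (m n)) at_top sequentially"
proof -
  define m where "m n = min n (nat \<lfloor>\<delta> n\<rfloor>)" for n
  have "1 \<le> m n \<and> m n \<le> n \<and> real (m n) \<le> \<delta> n" if "1 \<le> n" for n
  proof -
    have "1 \<le> \<delta> n" using assms(1) that by simp
    then show ?thesis using that unfolding m_def by linarith
  qed
  moreover have "filterlim (\<lambda>n. real (m n)) at_top sequentially"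
    unfolding filterlim_at_top
  proof
    fix Z :: real
    have "eventually (\<lambda>n. Z + 1 \<le> \<delta> n) sequentially"
      using assms(2) unfolding filterlim_at_top by blast
    moreover have "eventually (\<lambda>n. nat \<lceil>Z\<rceil> \<le> n) sequentially" by (rule eventually_ge_at_top)
    ultimately show "eventually (\<lambda>n. Z \<le> real (m n)) sequentially"
      unfolding m_def by eventually_elim linarith
  qed
  ultimately show ?thesis by blast
qed

theorem proposition5p7:
  fixes \<delta> :: "nat \<Rightarrow> real"
  assumes "\<forall>n\<ge>1. 1 < \<delta> n"
    and "filterlim \<delta> at_top sequentially"
  shows "\<exists>\<Omega> (\<kappa>::nat \<Rightarrow> real) (a::nat \<Rightarrow> nat \<Rightarrow> complex).
           centralizer \<Omega> \<and> \<not> trivial_centralizer \<Omega> \<and>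
           (\<forall>n\<ge>1. 0 < \<kappa> n \<and> \<kappa> n \<le> \<delta> n) \<and>
           filterlim \<kappa> at_top sequentially \<and>
           (\<forall>n\<ge>1. a n \<in> l2 \<and> a n \<noteq> (\<lambda>i. 0) \<and>
                   (\<forall>i. a n i \<noteq> 0 \<longrightarrow> i < n) \<and>
                   \<Omega> (a n) = (\<lambda>i. - 2 * a n i * complex_of_real (ln (\<kappa> n))))"
proof -
  have "\<forall>n\<ge>1. 1 \<le> \<delta> n" using assms(1) by (simp add: less_imp_le)
  then obtain m :: "nat \<Rightarrow> nat" where m: "\<forall>n\<ge>1. 1 \<le> m n \<and> m n \<le> n \<and> real (m n) \<le> \<delta> n"
    and lim: "filterlim (\<lambda>n. real (m n)) at_top sequentially"
    using exists_nat_lower_approximation_at_top[OF _ assms(2)] by blast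
  define a where "a n = (\<lambda>i. if i < m n then 1 else 0 :: complex)" for n
  have "a n \<in> l2" for n using l2_finite_support(1)[of "m n" "a n"] by (simp add: a_def)
  moreover have "a n \<noteq> (\<lambda>i. 0)" and "a n i \<noteq> 0 \<longrightarrow> i < n" if "n \<ge> 1" for n i
    using m[rule_format, OF that] by (auto simp: a_def fun_eq_iff intro: exI[of _ 0])
  moreover have "kalton_peck (a n) = (\<lambda>i. - 2 * a n i * of_real (ln (m n)))" for n
    by (rule kalton_peck_flat[where r = 1]) (simp_all add: a_def)
  ultimately show ?thesis
    using centralizer_kalton_peck kalton_peck_not_trivial m lim
    by (intro exI[of _ kalton_peck] exI[of _ "\<lambda>n. real (m n)"] exI[of _ a]) auto
qed

end
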